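(* Let $R$ be a commutative unital ring. Then the following are equivalent: (i) $\operatorname{sr}(R) \le 2$; (ii) for every ideal $I$ of $R$, the natural map $\operatorname{SL}_2(R) \to \operatorname{SL}_2(R/I)$ is surjective; (iii) for every ideal $I$ of $R$ and every $n \ge 2$, the natural map $\operatorname{SL}_n(R) \to \operatorname{SL}_n(R/I)$ is surjective.
   Context: A row $(r_1,\dots,r_n)\in R^n$ is unimodular if $\sum_i R r_i = R$; $\operatorname{Um}_n(R)$ is the set of such rows. A row $(r_1,\dots,r_{n+1})\in\operatorname{Um}_{n+1}(R)$ ($n>0$) is stable if there exist $s_1,\dots,s_n\in R$ with $(r_1+s_1r_{n+1},\dots,r_n+s_nr_{n+1})\in\operatorname{Um}_n(R)$. An integer $n>0$ lies in the stable range of $R$ if every row in $\operatorname{Um}_{n+1}(R)$ is stable; the Bass stable rank $\operatorname{sr}(R)$ is the least integer in the stable range of $R$ (and $\infty$ if there is none). *)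

theory Defs
  imports "Jordan_Normal_Form.Determinant" "HOL-Library.Extended_Nat"
begin

text \<open>Rows of length n are functions nat => 'a, only the entries with index < n matter.
  A row r of length n is unimodular iff the ideal generated by r 0, ..., r (n-1) is the whole ring.\<close>
definition unimodular :: "nat \<Rightarrow> (nat \<Rightarrow> 'a::comm_ring_1) \<Rightarrow> bool" where
  "unimodular n r \<longleftrightarrow> (\<exists>c. (\<Sum>i<n. c i * r i) = 1)"

text \<open>A row (r 0, ..., r n) of length n+1 is stable.\<close>
definition stable_row :: "nat \<Rightarrow> (nat \<Rightarrow> 'a::comm_ring_1) \<Rightarrow> bool" where
  "stable_row n r \<longleftrightarrow> (\<exists>s. unimodular n (\<lambda>i. r i + s i * r n))"

definition in_stable_range :: "'a::comm_ring_1 itself \<Rightarrow> nat \<Rightarrow> bool" where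
  "in_stable_range _ n \<longleftrightarrow> n > 0 \<and>
     (\<forall>r :: nat \<Rightarrow> 'a. unimodular (Suc n) r \<longrightarrow> stable_row n r)"

definition stable_rank :: "'a::comm_ring_1 itself \<Rightarrow> enat" where
  "stable_rank T = (if \<exists>n. in_stable_range T n
      then enat (LEAST n. in_stable_range T n) else \<infinity>)"

definition ring_ideal :: "'a::comm_ring_1 set \<Rightarrow> bool" where
  "ring_ideal I \<longleftrightarrow> 0 \<in> I \<and> (\<forall>x\<in>I. \<forall>y\<in>I. x + y \<in> I) \<and> (\<forall>r. \<forall>x\<in>I. r * x \<in> I)"

text \<open>Surjectivity of the natural map SL_n(R) -> SL_n(R/I), written out on representatives:
  every n x n matrix over R whose determinant is 1 modulo I (i.e. every element of SL_n(R/I),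
  lifted entrywise) is congruent modulo I entrywise to a matrix of determinant 1.\<close>
definition SL_reduction_surj :: "'a::comm_ring_1 set \<Rightarrow> nat \<Rightarrow> bool" where
  "SL_reduction_surj I n \<longleftrightarrow>
     (\<forall>A \<in> carrier_mat n n. det A - 1 \<in> I \<longrightarrow>
        (\<exists>B \<in> carrier_mat n n. det B = 1 \<and> (\<forall>i<n. \<forall>j<n. B $$ (i,j) - A $$ (i,j) \<in> I)))"

end

theory Submission
  imports Defs
begin

(* (i) implies (ii): if det A = 1 + e with e in I, Laplace expansion shows that the last column
   of A together with e is unimodular; stabilising it changes A modulo I into a matrix whose last
   column (b, d) satisfies p0 b + p1 d = 1, and adding f (-p1, p0) to the first column, where
   f in I is the remaining defect of the determinant, yields determinant 1.
   (ii) implies (i): given x0 r0 + x1 r1 + x2 r2 = 1, the matrix with rows (r0, r1), (-x1, x0)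
   has determinant 1 modulo (r2); the first row of a lift to SL_2(R) is a stabilisation of
   (r0, r1, r2), and its second row certifies that it is unimodular.
   (ii) implies (iii) by induction on n, as the stable range is upward closed: the last column
   is made unimodular modulo I as before, then turned into the last unit vector by row additions
   (this uses n - 1 in the stable range), which preserve the determinant and liftability, and
   the remaining (n-1) x (n-1) block is lifted by induction. *)

lemma ring_ideal_zero: "ring_ideal I \<Longrightarrow> 0 \<in> I"
  unfolding ring_ideal_def by blast

lemma ring_ideal_add: "ring_ideal I \<Longrightarrow> x \<in> I \<Longrightarrow> y \<in> I \<Longrightarrow> x + y \<in> I"
  unfolding ring_ideal_def by blast

lemma ring_ideal_mult_left: "ring_ideal I \<Longrightarrow> x \<in> I \<Longrightarrow> r * x \<in> I"
  unfolding ring_ideal_def by blast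

lemma ring_ideal_mult_right: "ring_ideal I \<Longrightarrow> x \<in> I \<Longrightarrow> x * r \<in> I"
  using ring_ideal_mult_left[of I x r] by (simp add: mult.commute)

lemma ring_ideal_uminus: "ring_ideal I \<Longrightarrow> x \<in> I \<Longrightarrow> - x \<in> I"
  using ring_ideal_mult_left[of I x "-1"] by simp

lemma ring_ideal_sum:
  "ring_ideal I \<Longrightarrow> (\<And>x. x \<in> S \<Longrightarrow> f x \<in> I) \<Longrightarrow> sum f S \<in> I"
  by (induction S rule: infinite_finite_induct) (auto intro: ring_ideal_add ring_ideal_zero)

lemma ring_ideal_prod_diff:
  assumes I: "ring_ideal I" and fg: "\<And>x. x \<in> S \<Longrightarrow> f x - g x \<in> I"
  shows "prod f S - prod g S \<in> I"
  using fg
proof (induction S rule: infinite_finite_induct)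
  case (insert a S)
  have "prod f (insert a S) - prod g (insert a S) = (f a - g a) * prod f S + g a * (prod f S - prod g S)"
    using insert.hyps by (simp add: algebra_simps)
  also have "\<dots> \<in> I"
    using insert by (intro ring_ideal_add[OF I] ring_ideal_mult_left[OF I] ring_ideal_mult_right[OF I]) auto
  finally show ?case .
qed (auto intro: ring_ideal_zero[OF I])

lemma ring_ideal_principal: "ring_ideal (range (\<lambda>u. u * (a::'a::comm_ring_1)))"
  unfolding ring_ideal_def
proof (intro conjI ballI allI)
  show "0 \<in> range (\<lambda>u. u * a)"
    using rangeI[of "\<lambda>u. u * a" 0] by simp
next
  fix x y assume "x \<in> range (\<lambda>u. u * a)" "y \<in> range (\<lambda>u. u * a)"
  then obtain u v where "x = u * a" "y = v * a" by blast
  then show "x + y \<in> range (\<lambda>u. u * a)"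
    using rangeI[of "\<lambda>u. u * a" "u + v"] by (simp add: distrib_right)
next
  fix r x assume "x \<in> range (\<lambda>u. u * a)"
  then obtain u where "x = u * a" by blast
  then show "r * x \<in> range (\<lambda>u. u * a)"
    using rangeI[of "\<lambda>u. u * a" "r * u"] by (simp add: mult.assoc)
qed

definition mat_cong_mod :: "'a::comm_ring_1 set \<Rightarrow> nat \<Rightarrow> 'a mat \<Rightarrow> 'a mat \<Rightarrow> bool" where
  "mat_cong_mod I n B A \<longleftrightarrow> (\<forall>i<n. \<forall>j<n. B $$ (i,j) - A $$ (i,j) \<in> I)"

lemma mat_cong_modI: "(\<And>i j. i < n \<Longrightarrow> j < n \<Longrightarrow> B $$ (i,j) - A $$ (i,j) \<in> I) \<Longrightarrow> mat_cong_mod I n B A"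
  unfolding mat_cong_mod_def by blast

lemma mat_cong_modD: "mat_cong_mod I n B A \<Longrightarrow> i < n \<Longrightarrow> j < n \<Longrightarrow> B $$ (i,j) - A $$ (i,j) \<in> I"
  unfolding mat_cong_mod_def by blast

lemma mat_cong_mod_trans:
  assumes I: "ring_ideal I" and "mat_cong_mod I n C B" "mat_cong_mod I n B A"
  shows "mat_cong_mod I n C A"
proof (rule mat_cong_modI)
  fix i j assume "i < n" "j < n"
  then have "(C $$ (i,j) - B $$ (i,j)) + (B $$ (i,j) - A $$ (i,j)) \<in> I"
    using assms by (intro ring_ideal_add[OF I]) (auto dest: mat_cong_modD)
  then show "C $$ (i,j) - A $$ (i,j) \<in> I" by simp
qed

lemma mat_cong_mod_addrow:
  assumes I: "ring_ideal I" and BA: "mat_cong_mod I n B A"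
    and B: "B \<in> carrier_mat n n" and A: "A \<in> carrier_mat n n" and l: "l < n"
  shows "mat_cong_mod I n (addrow a k l B) (addrow a k l A)"
proof (rule mat_cong_modI)
  fix i j assume ij: "i < n" "j < n"
  have "addrow a k l B $$ (i,j) - addrow a k l A $$ (i,j)
      = (if i = k then a * (B $$ (l,j) - A $$ (l,j)) else 0) + (B $$ (i,j) - A $$ (i,j))"
    using ij A B by (simp add: algebra_simps)
  also have "\<dots> \<in> I"
    using ij l BA by (intro ring_ideal_add[OF I]) (auto intro: ring_ideal_mult_left[OF I] ring_ideal_zero[OF I] mat_cong_modD)
  finally show "addrow a k l B $$ (i,j) - addrow a k l A $$ (i,j) \<in> I" .
qed

lemma det_cong_mod:
  assumes I: "ring_ideal I" and A: "A \<in> carrier_mat n n" and B: "B \<in> carrier_mat n n"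
    and BA: "mat_cong_mod I n B A"
  shows "det B - det A \<in> I"
proof -
  have "det B - det A = (\<Sum>p \<in> {p. p permutes {0..<n}}.
      signof p * ((\<Prod>i = 0..<n. B $$ (i, p i)) - (\<Prod>i = 0..<n. A $$ (i, p i))))"
    unfolding det_def'[OF A] det_def'[OF B] sum_subtractf[symmetric] by (simp add: right_diff_distrib)
  also have "\<dots> \<in> I"
  proof (intro ring_ideal_sum[OF I] ring_ideal_mult_left[OF I] ring_ideal_prod_diff[OF I])
    fix p i assume "p \<in> {p. p permutes {0..<n}}" "i \<in> {0..<n}"
    then show "B $$ (i, p i) - A $$ (i, p i) \<in> I"
      using BA permutes_in_image by (fastforce intro: mat_cong_modD)
  qed
  finally show ?thesis .
qed

lemma det_mat_2:
  assumes A: "A \<in> carrier_mat 2 2"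
  shows "det A = A $$ (0,0) * A $$ (1,1) - A $$ (0,1) * A $$ (1,0)"
proof -
  have det_1: "det B = B $$ (0,0)" if "B \<in> carrier_mat 1 1" for B :: "'a mat"
    using that by (subst det_upper_triangular[of _ 1]) (auto intro!: upper_triangularI simp: diag_mat_def)
  have "det A = (\<Sum>i<2. A $$ (i,0) * cofactor A i 0)"
    by (rule laplace_expansion_column[OF A]) auto
  also have "\<dots> = A $$ (0,0) * A $$ (1,1) - A $$ (0,1) * A $$ (1,0)"
    using A by (simp add: numeral_2_eq_2 cofactor_def det_1 mat_delete_carrier mat_delete_def)
  finally show ?thesis .
qed

lemma unimodular_cong: "(\<And>i. i < n \<Longrightarrow> r i = r' i) \<Longrightarrow> unimodular n r \<longleftrightarrow> unimodular n r'"
  unfolding unimodular_def by (metis (no_types, lifting) lessThan_iff sum.cong)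

lemma unimodular_if_combinations:
  assumes "unimodular n r" and "\<And>i. i < n \<Longrightarrow> \<exists>c. r i = (\<Sum>j<k. c j * r' j)"
  shows "unimodular k r'"
proof -
  obtain x where x: "(\<Sum>i<n. x i * r i) = 1"
    using assms(1) unfolding unimodular_def by blast
  obtain c where c: "\<And>i. i < n \<Longrightarrow> r i = (\<Sum>j<k. c i j * r' j)"
    using assms(2) by metis
  have "(\<Sum>j<k. (\<Sum>i<n. x i * c i j) * r' j) = (\<Sum>i<n. x i * r i)"
    by (simp add: c sum_distrib_left sum_distrib_right mult.assoc sum.swap[of _ "{..<k}"])
  with x show ?thesis
    unfolding unimodular_def by (intro exI) simp
qed

lemma in_stable_rangeD:
  assumes "in_stable_range TYPE('a::comm_ring_1) n" and "unimodular (Suc n) (r :: nat \<Rightarrow> 'a)"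
  obtains s where "unimodular n (\<lambda>i. r i + s i * r n)"
  using assms unfolding in_stable_range_def stable_row_def by blast

lemma in_stable_range_Suc:
  assumes sr: "in_stable_range TYPE('a::comm_ring_1) m"
  shows "in_stable_range TYPE('a) (Suc m)"
  unfolding in_stable_range_def
proof (intro conjI allI impI)
  show "Suc m > 0" by simp
  fix r :: "nat \<Rightarrow> 'a" assume "unimodular (Suc (Suc m)) r"
  then obtain x where x: "(\<Sum>i<Suc (Suc m). x i * r i) = 1"
    unfolding unimodular_def by blast
  define r' where "r' i = (if i < m then r i else x m * r m + x (Suc m) * r (Suc m))" for i
  have "(\<Sum>i<Suc m. (if i < m then x i else 1) * r' i) = 1"
    using x by (simp add: r'_def add.assoc)
  then have "unimodular (Suc m) r'"
    unfolding unimodular_def by (rule exI[of _ "\<lambda>i. if i < m then x i else 1"])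
  with sr obtain t where t: "unimodular m (\<lambda>i. r' i + t i * r' m)"
    by (rule in_stable_rangeD)
  define s where "s i = (if i < m then t i * x (Suc m) else 0)" for i
  have "unimodular (Suc m) (\<lambda>i. r i + s i * r (Suc m))"
  proof (rule unimodular_if_combinations[OF t])
    fix i assume "i < m"
    \<comment> \<open>with w the new row, the i-th entry of the stabilised short row is w i + t i x m w m\<close>
    then show "\<exists>c. r' i + t i * r' m = (\<Sum>j<Suc m. c j * (r j + s j * r (Suc m)))"
      by (intro exI[of _ "\<lambda>j. of_bool (j = i) + of_bool (j = m) * (t i * x m)"])
        (simp add: r'_def s_def distrib_right sum.distrib mult.assoc; simp add: algebra_simps)
  qed
  then show "stable_row (Suc m) r"
    unfolding stable_row_def by blast
qed

lemma in_stable_range_mono: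
  assumes "in_stable_range TYPE('a::comm_ring_1) m" and "m \<le> k"
  shows "in_stable_range TYPE('a) k"
  using assms(2,1) by (induction k rule: dec_induct) (auto intro: in_stable_range_Suc)

lemma stable_rank_le_iff: "stable_rank TYPE('a::comm_ring_1) \<le> enat n \<longleftrightarrow> in_stable_range TYPE('a) n"
proof
  assume le: "stable_rank TYPE('a) \<le> enat n"
  then have ex: "\<exists>k. in_stable_range TYPE('a) k"
    by (auto simp: stable_rank_def split: if_splits)
  with le have "(LEAST k. in_stable_range TYPE('a) k) \<le> n"
    by (simp add: stable_rank_def)
  with LeastI_ex[OF ex] show "in_stable_range TYPE('a) n"
    by (rule in_stable_range_mono)
next
  assume "in_stable_range TYPE('a) n"
  then show "stable_rank TYPE('a) \<le> enat n"
    unfolding stable_rank_def by (auto intro: Least_le)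
qed

lemma sum_lessThan_2: "(\<Sum>i<2. f i) = f 0 + f (1::nat)"
  by (simp add: numeral_2_eq_2)

lemma sum_lessThan_3: "(\<Sum>i<3. f i) = f 0 + f 1 + f (2::nat)"
  by (simp add: numeral_3_eq_3 numeral_2_eq_2)

definition has_SL_lift :: "'a::comm_ring_1 set \<Rightarrow> nat \<Rightarrow> 'a mat \<Rightarrow> bool" where
  "has_SL_lift I n A \<longleftrightarrow> (\<exists>B \<in> carrier_mat n n. det B = 1 \<and> mat_cong_mod I n B A)"

lemma SL_reduction_surj_iff:
  "SL_reduction_surj I n \<longleftrightarrow> (\<forall>A \<in> carrier_mat n n. det A - 1 \<in> I \<longrightarrow> has_SL_lift I n A)"
  unfolding SL_reduction_surj_def has_SL_lift_def mat_cong_mod_def by simp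

lemma has_SL_lift_cong:
  assumes "ring_ideal I" and "has_SL_lift I n A1" and "mat_cong_mod I n A1 A"
  shows "has_SL_lift I n A"
  using assms mat_cong_mod_trans unfolding has_SL_lift_def by blast

lemma addrow_uminus_addrow:
  fixes a :: "'a::ring_1"
  assumes "k \<noteq> l" and "l < dim_row A"
  shows "addrow (- a) k l (addrow a k l A) = A"
  using assms by (intro eq_matI) (auto simp: algebra_simps)

lemma has_SL_lift_addrow:
  assumes I: "ring_ideal I" and A: "A \<in> carrier_mat n n" and kl: "k \<noteq> l" "l < n"
    and lift: "has_SL_lift I n (addrow a k l A)"
  shows "has_SL_lift I n A"
proof -
  obtain B where B: "B \<in> carrier_mat n n" "det B = 1" "mat_cong_mod I n B (addrow a k l A)"
    using lift unfolding has_SL_lift_def by blast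
  have "mat_cong_mod I n (addrow (- a) k l B) (addrow (- a) k l (addrow a k l A))"
    using B A kl by (intro mat_cong_mod_addrow[OF I]) auto
  also have "addrow (- a) k l (addrow a k l A) = A"
    using A kl by (intro addrow_uminus_addrow) auto
  finally have "mat_cong_mod I n (addrow (- a) k l B) A" .
  moreover have "det (addrow (- a) k l B) = 1"
    using det_addrow[OF kl(2,1) B(1)] B(2) by simp
  ultimately show ?thesis
    using B(1) unfolding has_SL_lift_def by auto
qed

inductive addrow_steps :: "nat \<Rightarrow> 'a::comm_ring_1 mat \<Rightarrow> 'a mat \<Rightarrow> bool" for n where
  refl: "addrow_steps n A A"
| step: "addrow_steps n A B \<Longrightarrow> k < n \<Longrightarrow> l < n \<Longrightarrow> k \<noteq> l \<Longrightarrow> addrow_steps n A (addrow a k l B)"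

lemma addrow_steps_trans: "addrow_steps n B C \<Longrightarrow> addrow_steps n A B \<Longrightarrow> addrow_steps n A C"
  by (induction rule: addrow_steps.induct) (auto intro: addrow_steps.step)

lemma addrow_steps_carrier: "addrow_steps n A B \<Longrightarrow> A \<in> carrier_mat n n \<Longrightarrow> B \<in> carrier_mat n n"
  by (induction rule: addrow_steps.induct) auto

lemma addrow_steps_det: "addrow_steps n A B \<Longrightarrow> A \<in> carrier_mat n n \<Longrightarrow> det B = det A"
  by (induction rule: addrow_steps.induct) (auto simp: det_addrow addrow_steps_carrier)

lemma has_SL_lift_addrow_steps:
  assumes "ring_ideal I"
  shows "addrow_steps n A B \<Longrightarrow> A \<in> carrier_mat n n \<Longrightarrow> has_SL_lift I n B \<Longrightarrow> has_SL_lift I n A"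
  by (induction rule: addrow_steps.induct) (auto intro: has_SL_lift_addrow[OF assms] addrow_steps_carrier)

definition add_row_multiples :: "(nat \<Rightarrow> 'a::comm_ring_1) \<Rightarrow> nat \<Rightarrow> nat set \<Rightarrow> 'a mat \<Rightarrow> 'a mat" where
  "add_row_multiples s m S A = mat (dim_row A) (dim_col A)
     (\<lambda>(i,j). if i \<in> S then A $$ (i,j) + s i * A $$ (m,j) else A $$ (i,j))"

definition add_rows_to_row :: "(nat \<Rightarrow> 'a::comm_ring_1) \<Rightarrow> nat \<Rightarrow> nat set \<Rightarrow> 'a mat \<Rightarrow> 'a mat" where
  "add_rows_to_row t m S A = mat (dim_row A) (dim_col A)
     (\<lambda>(i,j). if i = m then A $$ (m,j) + (\<Sum>k\<in>S. t k * A $$ (k,j)) else A $$ (i,j))"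

lemma addrow_steps_add_row_multiples:
  assumes A: "A \<in> carrier_mat n n" and m: "m < n" and S: "finite S" "S \<subseteq> {..<n}" "m \<notin> S"
  shows "addrow_steps n A (add_row_multiples s m S A)"
  using S
proof (induction S rule: finite_induct)
  case empty
  have "add_row_multiples s m {} A = A"
    using A by (intro eq_matI) (auto simp: add_row_multiples_def)
  then show ?case by (simp add: addrow_steps.refl)
next
  case (insert x S)
  have "add_row_multiples s m (insert x S) A = addrow (s x) x m (add_row_multiples s m S A)"
    using A m insert by (intro eq_matI) (auto simp: add_row_multiples_def)
  then show ?case
    using insert m by (auto intro: addrow_steps.step)
qed

lemma addrow_steps_add_rows_to_row:
  assumes A: "A \<in> carrier_mat n n" and m: "m < n" and S: "finite S" "S \<subseteq> {..<n}" "m \<notin> S"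
  shows "addrow_steps n A (add_rows_to_row t m S A)"
  using S
proof (induction S rule: finite_induct)
  case empty
  have "add_rows_to_row t m {} A = A"
    using A by (intro eq_matI) (auto simp: add_rows_to_row_def)
  then show ?case by (simp add: addrow_steps.refl)
next
  case (insert x S)
  have "add_rows_to_row t m (insert x S) A = addrow (t x) m x (add_rows_to_row t m S A)"
    using A m insert by (intro eq_matI) (auto simp: add_rows_to_row_def algebra_simps)
  then show ?case
    using insert m by (auto intro: addrow_steps.step)
qed

lemma det_unit_last_column:
  assumes A: "A \<in> carrier_mat (Suc m) (Suc m)"
    and zero: "\<And>i. i < m \<Longrightarrow> A $$ (i,m) = 0" and one: "A $$ (m,m) = 1"
  shows "det A = det (mat_delete A m m)"
proof -
  have "det A = (\<Sum>i<Suc m. A $$ (i,m) * cofactor A i m)"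
    by (rule laplace_expansion_column[OF A]) simp
  also have "\<dots> = cofactor A m m"
    using zero one by simp
  also have "\<dots> = det (mat_delete A m m)"
    unfolding cofactor_def by (simp add: mult_2[symmetric] power_mult)
  finally show ?thesis .
qed

lemma has_SL_lift_unit_last_column:
  assumes I: "ring_ideal I" and surj: "SL_reduction_surj I m"
    and A: "A \<in> carrier_mat (Suc m) (Suc m)" and dA: "det A - 1 \<in> I"
    and zero: "\<And>i. i < m \<Longrightarrow> A $$ (i,m) = 0" and one: "A $$ (m,m) = 1"
  shows "has_SL_lift I (Suc m) A"
proof -
  have A': "mat_delete A m m \<in> carrier_mat m m"
    using mat_delete_carrier[OF A] by simp
  moreover have "det (mat_delete A m m) - 1 \<in> I"
    using dA det_unit_last_column[OF A zero one] by simp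
  ultimately obtain B' where B': "B' \<in> carrier_mat m m" "det B' = 1"
    and B'A': "mat_cong_mod I m B' (mat_delete A m m)"
    using surj unfolding SL_reduction_surj_iff has_SL_lift_def by blast
  define B where "B = mat (Suc m) (Suc m) (\<lambda>(i,j). if i < m \<and> j < m then B' $$ (i,j) else A $$ (i,j))"
  have B: "B \<in> carrier_mat (Suc m) (Suc m)"
    unfolding B_def by simp
  have "mat_delete B m m = B'"
    using B' by (intro eq_matI) (auto simp: mat_delete_def B_def)
  then have "det B = 1"
    using det_unit_last_column[OF B] zero one B'(2) by (simp add: B_def)
  moreover have "mat_cong_mod I (Suc m) B A"
  proof (rule mat_cong_modI)
    fix i j assume "i < Suc m" "j < Suc m"
    then show "B $$ (i,j) - A $$ (i,j) \<in> I"
      using mat_cong_modD[OF B'A', of i j] A ring_ideal_zero[OF I]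
      by (cases "i < m \<and> j < m") (auto simp: B_def mat_delete_def)
  qed
  ultimately show ?thesis
    using B unfolding has_SL_lift_def by blast
qed

lemma obtain_cong_unimodular_last_column:
  fixes A :: "'a::comm_ring_1 mat"
  assumes I: "ring_ideal I" and sr: "in_stable_range TYPE('a) (Suc m)"
    and A: "A \<in> carrier_mat (Suc m) (Suc m)" and dA: "det A - 1 \<in> I"
  obtains A1 where "A1 \<in> carrier_mat (Suc m) (Suc m)" "mat_cong_mod I (Suc m) A1 A"
    "det A1 - 1 \<in> I" "unimodular (Suc m) (\<lambda>i. A1 $$ (i,m))"
proof -
  define e where "e = det A - 1"
  define r where "r i = (if i < Suc m then A $$ (i,m) else e)" for i
  have "(\<Sum>i<Suc (Suc m). (if i < Suc m then cofactor A i m else -1) * r i) = 1"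
    using laplace_expansion_column[OF A, of m] by (simp add: r_def e_def mult.commute)
  then have "unimodular (Suc (Suc m)) r"
    unfolding unimodular_def by (rule exI[of _ "\<lambda>i. if i < Suc m then cofactor A i m else -1"])
  with sr obtain s where s: "unimodular (Suc m) (\<lambda>i. r i + s i * r (Suc m))"
    by (rule in_stable_rangeD)
  define A1 where "A1 = mat (Suc m) (Suc m) (\<lambda>(i,j). if j = m then A $$ (i,j) + s i * e else A $$ (i,j))"
  have A1: "A1 \<in> carrier_mat (Suc m) (Suc m)"
    unfolding A1_def by simp
  have "e \<in> I"
    using dA e_def by simp
  then have A1A: "mat_cong_mod I (Suc m) A1 A"
    by (intro mat_cong_modI) (auto simp: A1_def intro: ring_ideal_mult_left[OF I] ring_ideal_zero[OF I])
  have "det A1 - 1 = (det A1 - det A) + e"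
    unfolding e_def by simp
  also have "\<dots> \<in> I"
    using \<open>e \<in> I\<close> by (intro ring_ideal_add[OF I] det_cong_mod[OF I A A1 A1A])
  finally have "det A1 - 1 \<in> I" .
  moreover have "unimodular (Suc m) (\<lambda>i. A1 $$ (i,m))"
    by (rule unimodular_cong[THEN iffD1, OF _ s]) (simp add: A1_def r_def)
  ultimately show ?thesis
    using that A1 A1A by blast
qed

lemma last_column_reduction:
  fixes A :: "'a::comm_ring_1 mat"
  assumes sr: "in_stable_range TYPE('a) m"
    and A: "A \<in> carrier_mat (Suc m) (Suc m)" and col: "unimodular (Suc m) (\<lambda>i. A $$ (i,m))"
  obtains B where "addrow_steps (Suc m) A B" "\<forall>i<m. B $$ (i,m) = 0" "B $$ (m,m) = 1"
proof -
  obtain s where "unimodular m (\<lambda>i. A $$ (i,m) + s i * A $$ (m,m))"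
    using in_stable_rangeD[OF sr col] .
  then obtain p where p: "(\<Sum>i<m. p i * (A $$ (i,m) + s i * A $$ (m,m))) = 1"
    unfolding unimodular_def by blast
  have S: "m < Suc m" "finite {..<m}" "{..<m} \<subseteq> {..<Suc m}" "m \<notin> {..<m}"
    by auto
  define A2 where "A2 = add_row_multiples s m {..<m} A"
  have st2: "addrow_steps (Suc m) A A2"
    unfolding A2_def using A S by (rule addrow_steps_add_row_multiples)
  have A2: "A2 \<in> carrier_mat (Suc m) (Suc m)"
    using addrow_steps_carrier[OF st2 A] .
  have p2: "(\<Sum>k<m. p k * A2 $$ (k,m)) = 1"
    using p A by (simp add: A2_def add_row_multiples_def)
  \<comment> \<open>adds (1 - c) to the corner entry c\<close>
  define A3 where "A3 = add_rows_to_row (\<lambda>k. (1 - A2 $$ (m,m)) * p k) m {..<m} A2"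
  have st3: "addrow_steps (Suc m) A2 A3"
    unfolding A3_def using A2 S by (rule addrow_steps_add_rows_to_row)
  have A3: "A3 \<in> carrier_mat (Suc m) (Suc m)"
    using addrow_steps_carrier[OF st3 A2] .
  have A3_mm: "A3 $$ (m,m) = 1"
    using A2 p2 by (simp add: A3_def add_rows_to_row_def mult.assoc flip: sum_distrib_left)
  define A4 where "A4 = add_row_multiples (\<lambda>i. - A3 $$ (i,m)) m {..<m} A3"
  have st4: "addrow_steps (Suc m) A3 A4"
    unfolding A4_def using A3 S by (rule addrow_steps_add_row_multiples)
  show ?thesis
  proof (rule that)
    show "addrow_steps (Suc m) A A4"
      using st2 st3 st4 by (meson addrow_steps_trans)
    show "\<forall>i<m. A4 $$ (i,m) = 0"
      using A3 A3_mm by (simp add: A4_def add_row_multiples_def)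
    show "A4 $$ (m,m) = 1"
      using A3 A3_mm by (simp add: A4_def add_row_multiples_def)
  qed
qed

lemma SL_reduction_surj_2:
  fixes I :: "'a::comm_ring_1 set"
  assumes I: "ring_ideal I" and sr: "in_stable_range TYPE('a) 2"
  shows "SL_reduction_surj I 2"
  unfolding SL_reduction_surj_iff
proof (intro ballI impI)
  fix A :: "'a mat" assume A: "A \<in> carrier_mat 2 2" and dA: "det A - 1 \<in> I"
  obtain A1 where A1: "A1 \<in> carrier_mat 2 2" "mat_cong_mod I 2 A1 A"
    "det A1 - 1 \<in> I" "unimodular 2 (\<lambda>i. A1 $$ (i,1))"
    using obtain_cong_unimodular_last_column[of I 1 A] I sr A dA by (auto simp: numeral_2_eq_2)
  then obtain p :: "nat \<Rightarrow> 'a" where p: "p 0 * A1 $$ (0,1) + p 1 * A1 $$ (1,1) = 1"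
    unfolding unimodular_def sum_lessThan_2 by metis
  define f where "f = det A1 - 1"
  \<comment> \<open>this lowers the determinant by f (p 0 b + p 1 d) = f, where (b, d) is the second column\<close>
  define B where "B = mat 2 2 (\<lambda>(i,j). if j = 0 then A1 $$ (i,0) + f * (if i = 0 then - p 1 else p 0) else A1 $$ (i,j))"
  have B: "B \<in> carrier_mat 2 2"
    unfolding B_def by simp
  have "det B = det A1 - f * (p 0 * A1 $$ (0,1) + p 1 * A1 $$ (1,1))"
    using A1(1) B by (simp add: det_mat_2 B_def algebra_simps)
  then have "det B = 1"
    unfolding p f_def by simp
  moreover have "mat_cong_mod I 2 B A1"
    using A1(1,3) by (intro mat_cong_modI)
      (auto simp: B_def f_def intro: ring_ideal_uminus[OF I] ring_ideal_mult_right[OF I] ring_ideal_zero[OF I])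
  ultimately have "has_SL_lift I 2 A1"
    using B unfolding has_SL_lift_def by blast
  then show "has_SL_lift I 2 A"
    using has_SL_lift_cong[OF I _ A1(2)] by blast
qed

lemma in_stable_range_2_if_SL_reduction_surj_2:
  assumes surj: "\<forall>I::'a::comm_ring_1 set. ring_ideal I \<longrightarrow> SL_reduction_surj I 2"
  shows "in_stable_range TYPE('a) 2"
  unfolding in_stable_range_def
proof (intro conjI allI impI)
  fix r :: "nat \<Rightarrow> 'a" assume "unimodular (Suc 2) r"
  then have "unimodular 3 r"
    by simp
  then obtain x :: "nat \<Rightarrow> 'a" where x: "x 0 * r 0 + x 1 * r 1 + x 2 * r 2 = 1"
    unfolding unimodular_def sum_lessThan_3 by metis
  define I where "I = range (\<lambda>u. u * r 2)"
  define A where "A = mat 2 2 (\<lambda>(i,j). if i = 0 then r j else if j = 0 then - x 1 else x 0)"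
  have A: "A \<in> carrier_mat 2 2"
    unfolding A_def by simp
  have "det A - 1 = (- x 2) * r 2"
    unfolding det_mat_2[OF A] using x by (simp add: A_def algebra_simps)
  then have "det A - 1 \<in> I"
    unfolding I_def by (metis rangeI)
  then obtain B where B: "B \<in> carrier_mat 2 2" "det B = 1" "mat_cong_mod I 2 B A"
    using surj ring_ideal_principal A unfolding I_def SL_reduction_surj_iff has_SL_lift_def by blast
  obtain u0 u1 where u: "B $$ (0,0) - r 0 = u0 * r 2" "B $$ (0,1) - r 1 = u1 * r 2"
    using mat_cong_modD[OF B(3), of 0 0] mat_cong_modD[OF B(3), of 0 1] unfolding I_def by (auto simp: A_def)
  define s where "s i = (if i = 0 then u0 else u1)" for i :: nat
  have "B $$ (1,1) * (r 0 + s 0 * r 2) + (- B $$ (1,0)) * (r 1 + s 1 * r 2) = det B"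
    using u by (simp add: det_mat_2[OF B(1)] s_def algebra_simps eq_diff_eq)
  then have "unimodular 2 (\<lambda>i. r i + s i * r 2)"
    unfolding unimodular_def sum_lessThan_2 B(2)
    by (intro exI[of _ "\<lambda>i. if i = 0 then B $$ (1,1) else - B $$ (1,0)"]) simp
  then show "stable_row 2 r"
    unfolding stable_row_def by blast
qed simp

lemma SL_reduction_surj_Suc:
  fixes I :: "'a::comm_ring_1 set"
  assumes I: "ring_ideal I" and sr: "in_stable_range TYPE('a) m" and surj: "SL_reduction_surj I m"
  shows "SL_reduction_surj I (Suc m)"
  unfolding SL_reduction_surj_iff
proof (intro ballI impI)
  fix A :: "'a mat" assume A: "A \<in> carrier_mat (Suc m) (Suc m)" and dA: "det A - 1 \<in> I"
  obtain A1 where A1: "A1 \<in> carrier_mat (Suc m) (Suc m)" "mat_cong_mod I (Suc m) A1 A"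
    "det A1 - 1 \<in> I" "unimodular (Suc m) (\<lambda>i. A1 $$ (i,m))"
    using obtain_cong_unimodular_last_column[OF I in_stable_range_Suc[OF sr] A dA] .
  obtain B where B: "addrow_steps (Suc m) A1 B" "\<forall>i<m. B $$ (i,m) = 0" "B $$ (m,m) = 1"
    using last_column_reduction[OF sr A1(1) A1(4)] .
  have "det B - 1 \<in> I"
    using addrow_steps_det[OF B(1) A1(1)] A1(3) by simp
  then have "has_SL_lift I (Suc m) B"
    using has_SL_lift_unit_last_column[OF I surj addrow_steps_carrier[OF B(1) A1(1)]] B(2,3) by simp
  then have "has_SL_lift I (Suc m) A1"
    using has_SL_lift_addrow_steps[OF I B(1) A1(1)] by blast
  then show "has_SL_lift I (Suc m) A"
    using has_SL_lift_cong[OF I _ A1(2)] by blast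
qed

lemma SL_reduction_surj_if_in_stable_range_2:
  assumes sr: "in_stable_range TYPE('a::comm_ring_1) 2" and I: "ring_ideal (I :: 'a set)"
  shows "2 \<le> n \<Longrightarrow> SL_reduction_surj I n"
proof (induction n rule: nat_induct_at_least)
  case base
  show ?case by (rule SL_reduction_surj_2[OF I sr])
next
  case (Suc n)
  show ?case
    by (rule SL_reduction_surj_Suc[OF I in_stable_range_mono[OF sr Suc.hyps] Suc.IH])
qed

theorem mainTheorem3:
  shows "(stable_rank TYPE('a::comm_ring_1) \<le> 2 \<longleftrightarrow>
            (\<forall>I::'a set. ring_ideal I \<longrightarrow> SL_reduction_surj I 2))
       \<and> ((\<forall>I::'a set. ring_ideal I \<longrightarrow> SL_reduction_surj I 2) \<longleftrightarrow>
            (\<forall>I::'a set. ring_ideal I \<longrightarrow> (\<forall>n\<ge>2. SL_reduction_surj I n)))"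
proof -
  have "stable_rank TYPE('a) \<le> 2 \<longleftrightarrow> in_stable_range TYPE('a) 2"
    using stable_rank_le_iff[of 2] by (simp add: numeral_eq_enat)
  then show ?thesis
    using SL_reduction_surj_if_in_stable_range_2 in_stable_range_2_if_SL_reduction_surj_2 by blast
qed

end
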